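(* Let $\mathfrak g=\mathbb R f_1\ltimes_M\mathbb R^3$ be a 4-dimensional almost abelian Lie algebra, where $\mathbb R^3$ is an abelian ideal with basis $\{f_2,f_3,f_4\}$ and $M=\operatorname{ad}_{f_1}|_{\mathbb R^3}$ has matrix $\begin{pmatrix}\mu & w^{T}\\ 0 & A\end{pmatrix}$ with $\mu\in\mathbb R$, $w\in\mathbb R^2$, $A\in\mathfrak{gl}(2,\mathbb R)$. If $\operatorname{tr}(A)\neq 0$, then $\mathfrak g$ admits an LCS structure.
   Context: An LCS structure on a Lie algebra $\mathfrak g$ is a pair $(\omega,\theta)$ with $\omega\in\Lambda^2\mathfrak g^*$ non-degenerate and $\theta\in\mathfrak g^*$ closed and nonzero, such that $d\omega=\theta\wedge\omega$ ($d$ the Chevalley–Eilenberg differential). *)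

theory Defs
  imports "HOL-Analysis.Analysis"
begin

text \<open>Chevalley--Eilenberg differential of a 1-form theta and of a 2-form omega on a
Lie algebra with bracket br (convention: d theta (x,y) = - theta [x,y]).\<close>

definition ce_d1 :: "('a \<Rightarrow> 'a \<Rightarrow> 'a) \<Rightarrow> ('a \<Rightarrow> real) \<Rightarrow> 'a \<Rightarrow> 'a \<Rightarrow> real" where
  "ce_d1 br \<theta> x y = - \<theta> (br x y)"

definition ce_d2 :: "('a \<Rightarrow> 'a \<Rightarrow> 'a) \<Rightarrow> ('a \<Rightarrow> 'a \<Rightarrow> real) \<Rightarrow> 'a \<Rightarrow> 'a \<Rightarrow> 'a \<Rightarrow> real" where
  "ce_d2 br \<omega> x y z = - \<omega> (br x y) z + \<omega> (br x z) y - \<omega> (br y z) x"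

definition wedge12 :: "('a \<Rightarrow> real) \<Rightarrow> ('a \<Rightarrow> 'a \<Rightarrow> real) \<Rightarrow> 'a \<Rightarrow> 'a \<Rightarrow> 'a \<Rightarrow> real" where
  "wedge12 \<theta> \<omega> x y z = \<theta> x * \<omega> y z - \<theta> y * \<omega> x z + \<theta> z * \<omega> x y"

definition lcs_structure ::
  "('a::real_vector \<Rightarrow> 'a \<Rightarrow> 'a) \<Rightarrow> ('a \<Rightarrow> 'a \<Rightarrow> real) \<Rightarrow> ('a \<Rightarrow> real) \<Rightarrow> bool" where
  "lcs_structure br \<omega> \<theta> \<longleftrightarrow>
     bilinear \<omega> \<and> (\<forall>x y. \<omega> x y = - \<omega> y x) \<and>
     (\<forall>x. (\<forall>y. \<omega> x y = 0) \<longrightarrow> x = 0) \<and>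
     linear \<theta> \<and> (\<forall>x y. ce_d1 br \<theta> x y = 0) \<and> \<theta> \<noteq> (\<lambda>_. 0) \<and>
     (\<forall>x y z. ce_d2 br \<omega> x y z = wedge12 \<theta> \<omega> x y z)"

text \<open>The almost abelian Lie algebra R f1 \<ltimes>_M R^3, modelled on real \<times> real^3:
 (s,u) = s f1 + u, with u in the abelian ideal R^3 = span{f2,f3,f4};
 [f1, v] = M v for v in R^3, and R^3 abelian.\<close>
definition aa_bracket :: "real^3^3 \<Rightarrow> (real \<times> (real^3)) \<Rightarrow> (real \<times> (real^3)) \<Rightarrow> (real \<times> (real^3))" where
  "aa_bracket M p q = (0, fst p *\<^sub>R (M *v snd q) - fst q *\<^sub>R (M *v snd p))"

text \<open>The matrix (mu, w^T; 0, A) of M in the basis f2,f3,f4 (columns = images of basis vectors).\<close>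
definition block_M :: "real \<Rightarrow> real^2 \<Rightarrow> real^2^2 \<Rightarrow> real^3^3" where
  "block_M \<mu> w A = (\<chi> i j.
     if i = 1 then (if j = 1 then \<mu> else if j = 2 then w$1 else w$2)
     else if j = 1 then 0
     else if i = 2 then (if j = 2 then A$1$1 else A$1$2)
     else (if j = 2 then A$2$1 else A$2$2))"

end

theory Submission
  imports Defs
begin

text \<open>Take \<omega> = f1^f2 + f3^f4 and \<theta> = -tr(A) f1 in the dual basis. Since f1 vanishes on the
derived algebra, d(f1^f2) = 0 = \<theta>^f1^f2, while d(f3^f4) = -tr(A) f1^f3^f4 because the area form
of the plane span{f3,f4} scales by the trace under the derivation A.\<close>

definition plane_area :: "real^3 \<Rightarrow> real^3 \<Rightarrow> real" where
  "plane_area u v = u$2 * v$3 - u$3 * v$2"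

definition lcs_form :: "real \<times> (real^3) \<Rightarrow> real \<times> (real^3) \<Rightarrow> real" where
  "lcs_form p q = fst p * snd q $ 1 - fst q * snd p $ 1 + plane_area (snd p) (snd q)"

lemma block_M_mult_vec_nth:
  "(block_M \<mu> w A *v v) $ 1 = \<mu> * v$1 + w$1 * v$2 + w$2 * v$3"
  "(block_M \<mu> w A *v v) $ 2 = A$1$1 * v$2 + A$1$2 * v$3"
  "(block_M \<mu> w A *v v) $ 3 = A$2$1 * v$2 + A$2$2 * v$3"
  by (simp_all add: matrix_vector_mult_def block_M_def sum_3)

lemma plane_area_block_M_derivation:
  "plane_area (block_M \<mu> w A *v u) v + plane_area u (block_M \<mu> w A *v v) = trace A * plane_area u v"
  by (simp add: plane_area_def block_M_mult_vec_nth trace_def sum_2 algebra_simps)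

lemma bilinear_lcs_form: "bilinear lcs_form"
  unfolding bilinear_def linear_iff lcs_form_def plane_area_def by (simp add: algebra_simps)

lemma lcs_form_antisym: "lcs_form p q = - lcs_form q p"
  by (simp add: lcs_form_def plane_area_def)

lemma lcs_form_nondegenerate:
  assumes "\<forall>q. lcs_form p q = 0"
  shows "p = 0"
proof -
  have "lcs_form p (1, 0) = 0" "lcs_form p (0, axis 1 1) = 0"
       "lcs_form p (0, axis 2 1) = 0" "lcs_form p (0, axis 3 1) = 0"
    using assms by auto
  then have "fst p = 0" "snd p $ 1 = 0" "snd p $ 2 = 0" "snd p $ 3 = 0"
    by (auto simp: lcs_form_def plane_area_def axis_def)
  then show "p = 0"
    by (simp add: prod_eq_iff vec_eq_iff forall_3)
qed

lemma ce_d2_lcs_form: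
  "ce_d2 (aa_bracket (block_M \<mu> w A)) lcs_form x y z
     = wedge12 (\<lambda>p. - trace A * fst p) lcs_form x y z"
proof -
  let ?M = "block_M \<mu> w A"
  have "ce_d2 (aa_bracket ?M) lcs_form x y z
     = - fst x * (plane_area (?M *v snd y) (snd z) + plane_area (snd y) (?M *v snd z))
       + fst y * (plane_area (?M *v snd x) (snd z) + plane_area (snd x) (?M *v snd z))
       - fst z * (plane_area (?M *v snd x) (snd y) + plane_area (snd x) (?M *v snd y))"
    by (simp add: ce_d2_def aa_bracket_def lcs_form_def plane_area_def) (simp add: algebra_simps)
  also have "\<dots> = wedge12 (\<lambda>p. - trace A * fst p) lcs_form x y z"
    unfolding plane_area_block_M_derivation
    by (simp add: wedge12_def lcs_form_def) (simp add: algebra_simps)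
  finally show ?thesis .
qed

theorem lemma4p4:
  fixes \<mu> :: real and w :: "real^2" and A :: "real^2^2"
  assumes "trace A \<noteq> 0"
  shows "\<exists>\<omega> \<theta>. lcs_structure (aa_bracket (block_M \<mu> w A)) \<omega> \<theta>"
proof -
  let ?\<theta> = "\<lambda>p::real \<times> (real^3). - trace A * fst p"
  have "?\<theta> (1, 0) \<noteq> 0"
    using assms by simp
  then have "?\<theta> \<noteq> (\<lambda>_. 0)"
    by metis
  moreover have "linear ?\<theta>"
    unfolding linear_iff by (simp add: algebra_simps)
  moreover have "ce_d1 (aa_bracket (block_M \<mu> w A)) ?\<theta> x y = 0" for x y
    by (simp add: ce_d1_def aa_bracket_def)
  ultimately have "lcs_structure (aa_bracket (block_M \<mu> w A)) lcs_form ?\<theta>"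
    unfolding lcs_structure_def
    using bilinear_lcs_form lcs_form_antisym lcs_form_nondegenerate ce_d2_lcs_form
    by blast
  then show ?thesis
    by blast
qed

end
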